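(* Let $\Psi:(0,1]\to(0,\infty)$ be a decreasing function such that $s\mapsto s\Psi(s)$ is increasing and $\int_0^1\frac{ds}{s\Psi(s)}<\infty$. There is a constant $C$ depending only on $\Psi$ such that for every weight $w$ on $\mathbb{R}$ with $\mathbf{n}_\Psi(N_I^w)<\infty$ for all dyadic intervals $I\in\mathcal{D}$, and every $J\in\mathcal{D}$, \[ \sum_{I\in\mathcal{D},\,I\subset J}\mathbf{n}_\Psi(N_I^w)^{-1}(\Delta_I w)^2\,|I|\le C\,w(J), \] where in the summation the intervals $I$ on which $w\equiv 0$ are skipped.
   Context: $\mathcal{D}$ is the standard dyadic lattice of intervals $[k2^{-j},(k+1)2^{-j})$ in $\mathbb{R}$. A weight is a nonnegative locally integrable function; $w(J)=\int_J w\,dx$, $\langle w\rangle_I=\frac1{|I|}\int_I w$. For $I\in\mathcal{D}$ with left and right halves $I_-,I_+$, $\Delta_I w=\langle w\rangle_{I_+}-\langle w\rangle_{I_-}$. The normalized distribution function is $N_I^w(t)=\frac{1}{|I|}|\{x\in I:w(x)>t\}|$, and $\mathbf{n}_\Psi(N)=\int_0^\infty N(t)\Psi(N(t))\,dt$ (integrand taken as $0$ where $N(t)=0$). *)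

theory Defs
  imports "HOL-Analysis.Analysis"
begin

definition dyadic :: "int \<Rightarrow> int \<Rightarrow> real set" where
  "dyadic j k = {real_of_int k * 2 powr (- real_of_int j) ..< (real_of_int k + 1) * 2 powr (- real_of_int j)}"

definition weight :: "(real \<Rightarrow> real) \<Rightarrow> bool" where
  "weight w \<longleftrightarrow> (\<forall>x. 0 \<le> w x) \<and> (\<forall>a b. set_integrable lborel {a..b} w)"

definition wmeas :: "(real \<Rightarrow> real) \<Rightarrow> real set \<Rightarrow> real" where
  "wmeas w J = (LINT x:J|lborel. w x)"

definition avg :: "(real \<Rightarrow> real) \<Rightarrow> real set \<Rightarrow> real" where
  "avg w J = wmeas w J / measure lborel J"

text \<open>Left and right halves of dyadic (j,k) are dyadic (j+1,2k) and dyadic (j+1,2k+1).\<close>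
definition Delta :: "(real \<Rightarrow> real) \<Rightarrow> int \<Rightarrow> int \<Rightarrow> real" where
  "Delta w j k = avg w (dyadic (j+1) (2*k+1)) - avg w (dyadic (j+1) (2*k))"

definition Ndist :: "(real \<Rightarrow> real) \<Rightarrow> real set \<Rightarrow> real \<Rightarrow> real" where
  "Ndist w I t = measure lborel {x\<in>I. w x > t} / measure lborel I"

definition nPsi :: "(real \<Rightarrow> real) \<Rightarrow> (real \<Rightarrow> real) \<Rightarrow> ennreal" where
  "nPsi \<Psi> N = (\<integral>\<^sup>+ t\<in>{0<..}. ennreal (if N t = 0 then 0 else N t * \<Psi> (N t)) \<partial>lborel)"

end

theory Submission
  imports Defs
begin

text \<open>A Bellman-function argument. Let \<open>\<phi>\<^sub>h(s) = u - u\<^sup>2/(2h)\<close> with \<open>u = min s h\<close>, and let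
  \<open>F = \<Sum>\<^sub>k \<phi>\<^sub>h\<^sub>k / \<Psi>(h\<^sub>k)\<close> for \<open>h\<^sub>k = 2^-k\<close>. Comparing with \<open>\<integral>\<^sub>0\<^sup>1 ds/(s\<Psi>(s))\<close> shows
  \<open>K = \<Sum>\<^sub>k 1/\<Psi>(h\<^sub>k) < \<infinity>\<close>, so \<open>F(s) \<le> K s\<close>; and choosing \<open>h\<^sub>k\<close> comparable to \<open>m = (a+b)/2\<close>
  makes the midpoint defect of \<open>F\<close> quantitatively positive:
  \<open>(b - a)\<^sup>2 \<le> 32 m\<Psi>(m) (F(m) - (F(a) + F(b))/2)\<close>.
  Put \<open>B(I) = \<integral>\<^sub>0\<^sup>\<infinity> F(N\<^sub>I(t)) dt \<le> K \<langle>w\<rangle>\<^sub>I\<close>. Since \<open>N\<^sub>I = (N\<^sub>I\<^sub>- + N\<^sub>I\<^sub>+)/2\<close> and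
  \<open>|\<Delta>\<^sub>I w| \<le> \<integral> |N\<^sub>I\<^sub>+ - N\<^sub>I\<^sub>-|\<close>, integrating the defect bound with Cauchy-Schwarz gives
  \<open>(\<Delta>\<^sub>I w)\<^sup>2 \<le> 32 n\<^sub>\<Psi>(N\<^sub>I) (B(I) - (B(I\<^sub>-) + B(I\<^sub>+))/2)\<close>. So the sum over \<open>I \<subseteq> J\<close>
  telescopes along the dyadic tree against the potential \<open>32 |I| B(I)\<close>, which at \<open>J\<close> is at
  most \<open>32 K w(J)\<close>.\<close>

lemma abs_le_amgm:
  fixes x G H \<mu> :: real
  assumes "x\<^sup>2 \<le> G * H" "0 \<le> G" "0 \<le> H" "0 < \<mu>"
  shows "\<bar>x\<bar> \<le> (\<mu> * G + H / \<mu>) / 2"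
proof -
  have "((\<mu> * G + H / \<mu>) / 2)\<^sup>2 = G * H + ((\<mu> * G - H / \<mu>) / 2)\<^sup>2"
    using assms(4) by (simp add: power2_eq_square field_simps)
  hence "\<bar>x\<bar>\<^sup>2 \<le> ((\<mu> * G + H / \<mu>) / 2)\<^sup>2"
    using assms(1) by (simp add: add_increasing2)
  thus ?thesis by (rule power2_le_imp_le) (use assms in simp)
qed

text \<open>The optimisation over \<open>\<mu>\<close> that turns the AM-GM bounds back into \<open>D\<^sup>2 \<le> P Q\<close>;
  for \<open>P = 0\<close> the claim holds because division by zero yields \<open>0\<close>.\<close>

lemma sq_div_le_of_forall_amgm:
  fixes D P Q :: real
  assumes "0 \<le> P" "0 \<le> Q" and amgm: "\<And>\<mu>. 0 < \<mu> \<Longrightarrow> \<bar>D\<bar> \<le> (\<mu> * Q + P / \<mu>) / 2"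
  shows "D\<^sup>2 / P \<le> Q"
proof (cases "P = 0 \<or> D = 0")
  case True
  thus ?thesis using assms(2) by auto
next
  case False
  hence P: "0 < P" and D: "0 < \<bar>D\<bar>" using assms(1) by auto
  have "\<bar>D\<bar> \<le> (P / \<bar>D\<bar> * Q + \<bar>D\<bar>) / 2"
    using amgm[of "P / \<bar>D\<bar>"] P D by simp
  hence "\<bar>D\<bar> * \<bar>D\<bar> \<le> P * Q" using D by (simp add: field_simps)
  thus ?thesis using P by (simp add: power2_eq_square pos_divide_le_eq mult.commute)
qed

section \<open>A concave profile with quantified strict concavity\<close>

definition quad_cap :: "real \<Rightarrow> real \<Rightarrow> real" where
  "quad_cap h s = (let u = max 0 (min s h) in u - u\<^sup>2 / (2*h))"

lemma quad_cap_eq: "0 \<le> s \<Longrightarrow> s \<le> h \<Longrightarrow> quad_cap h s = s - s\<^sup>2 / (2*h)"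
  by (simp add: quad_cap_def)

lemma mono_on_quad_cap_part:
  fixes h :: real
  assumes "0 < h"
  shows "mono_on {0..h} (\<lambda>u. u - u\<^sup>2 / (2*h))"
proof (rule mono_onI)
  fix u v assume uv: "u \<in> {0..h}" "v \<in> {0..h}" "u \<le> v"
  have "(u + v)/(2*h) \<le> 1" using assms uv by (simp add: divide_le_eq_1)
  hence "0 \<le> (v - u) * (1 - (u + v)/(2*h))" using uv by simp
  also have "(v - u) * (1 - (u + v)/(2*h)) = (v - v\<^sup>2/(2*h)) - (u - u\<^sup>2/(2*h))"
    using assms by (simp add: field_simps power2_eq_square)
  finally show "u - u\<^sup>2/(2*h) \<le> v - v\<^sup>2/(2*h)" by simp
qed

lemma quad_cap_mono: "0 < h \<Longrightarrow> s \<le> t \<Longrightarrow> quad_cap h s \<le> quad_cap h t"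
  unfolding quad_cap_def Let_def
  by (rule mono_onD[OF mono_on_quad_cap_part]) auto

lemma quad_cap_nonneg: "0 < h \<Longrightarrow> 0 \<le> quad_cap h s"
  using quad_cap_mono[of h "min 0 s" s] by (simp add: quad_cap_def)

lemma quad_cap_le_min:
  assumes "0 < h" "0 \<le> s"
  shows "quad_cap h s \<le> min s h"
proof -
  have "quad_cap h s = min s h - (min s h)\<^sup>2 / (2*h)"
    using assms by (simp add: quad_cap_def Let_def max_absorb2)
  moreover have "0 \<le> (min s h)\<^sup>2 / (2*h)" using assms(1) by simp
  ultimately show ?thesis by linarith
qed

lemma quad_cap_le_self: "0 < h \<Longrightarrow> 0 \<le> s \<Longrightarrow> quad_cap h s \<le> s"
  using quad_cap_le_min by fastforce

lemma quad_cap_le: "0 < h \<Longrightarrow> quad_cap h s \<le> h"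
  using quad_cap_le_min[of h "max 0 s"] by (auto simp: quad_cap_def max_def)

lemma quad_cap_midpoint_defect:
  assumes "0 < h" "0 \<le> a" "a \<le> h" "0 \<le> b" "b \<le> h"
  shows "quad_cap h ((a+b)/2) - (quad_cap h a + quad_cap h b)/2 = (b - a)\<^sup>2 / (8*h)"
  using assms by (simp add: quad_cap_eq field_simps power2_eq_square)

lemma quad_cap_midpoint_concave:
  assumes "0 < h" "0 \<le> a" "0 \<le> b"
  shows "(quad_cap h a + quad_cap h b)/2 \<le> quad_cap h ((a+b)/2)"
proof -
  define u v where "u = min a h" and "v = min b h"
  have uv: "0 \<le> u" "u \<le> h" "0 \<le> v" "v \<le> h" using assms by (auto simp: u_def v_def)
  have "quad_cap h a = quad_cap h u" "quad_cap h b = quad_cap h v"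
    using assms by (auto simp: quad_cap_def u_def v_def)
  moreover have "0 \<le> quad_cap h ((u+v)/2) - (quad_cap h u + quad_cap h v)/2"
    unfolding quad_cap_midpoint_defect[OF assms(1) uv] using assms(1) by simp
  ultimately have "(quad_cap h a + quad_cap h b)/2 \<le> quad_cap h ((u+v)/2)" by simp
  also have "\<dots> \<le> quad_cap h ((a+b)/2)"
    using assms(1) by (rule quad_cap_mono) (auto simp: u_def v_def)
  finally show ?thesis .
qed

definition dyadic_profile :: "(nat \<Rightarrow> real) \<Rightarrow> real \<Rightarrow> real" where
  "dyadic_profile c s = (\<Sum>k. c k * quad_cap ((1/2)^k) s)"

context
  fixes c :: "nat \<Rightarrow> real"
  assumes summable: "summable c" and nonneg: "\<And>k. 0 \<le> c k"
begin

lemma summable_dyadic_profile: "summable (\<lambda>k. c k * quad_cap ((1/2)^k) s)"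
proof (rule summable_comparison_test'[OF summable])
  fix k :: nat
  have "0 \<le> quad_cap ((1/2)^k) s" "quad_cap ((1/2)^k) s \<le> 1"
    using quad_cap_nonneg[of "(1/2)^k" s] quad_cap_le[of "(1/2)^k" s]
      power_le_one[of "1/2::real" k] by auto
  thus "norm (c k * quad_cap ((1/2)^k) s) \<le> c k"
    using nonneg[of k] by (simp add: abs_mult mult_left_le)
qed

lemma dyadic_profile_nonneg: "0 \<le> dyadic_profile c s"
  unfolding dyadic_profile_def
  by (intro suminf_nonneg summable_dyadic_profile mult_nonneg_nonneg nonneg quad_cap_nonneg) simp

lemma dyadic_profile_mono: "s \<le> t \<Longrightarrow> dyadic_profile c s \<le> dyadic_profile c t"
  unfolding dyadic_profile_def
  by (intro suminf_le summable_dyadic_profile mult_left_mono nonneg quad_cap_mono) simp_all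

lemma dyadic_profile_le: "0 \<le> s \<Longrightarrow> dyadic_profile c s \<le> suminf c * s"
proof -
  assume s: "0 \<le> s"
  have "dyadic_profile c s \<le> (\<Sum>k. c k * s)" unfolding dyadic_profile_def
    by (intro suminf_le summable_dyadic_profile summable_mult2 summable
        mult_left_mono nonneg quad_cap_le_self s) simp
  thus ?thesis by (simp add: suminf_mult2[OF summable])
qed

lemma dyadic_profile_midpoint_defect_ge:
  assumes "0 \<le> a" "0 \<le> b"
  shows "c k * (quad_cap ((1/2)^k) ((a+b)/2) - (quad_cap ((1/2)^k) a + quad_cap ((1/2)^k) b)/2)
           \<le> dyadic_profile c ((a+b)/2) - (dyadic_profile c a + dyadic_profile c b)/2"
proof -
  define d where "d = (\<lambda>k. c k * (quad_cap ((1/2)^k) ((a+b)/2)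
                        - (quad_cap ((1/2)^k) a + quad_cap ((1/2)^k) b)/2))"
  have "(\<lambda>k. c k * quad_cap ((1/2)^k) ((a+b)/2)
          - (c k * quad_cap ((1/2)^k) a + c k * quad_cap ((1/2)^k) b)/2) sums
        (dyadic_profile c ((a+b)/2) - (dyadic_profile c a + dyadic_profile c b)/2)"
    unfolding dyadic_profile_def
    by (intro sums_diff sums_divide sums_add summable_sums summable_dyadic_profile)
  hence d_sums: "d sums (dyadic_profile c ((a+b)/2) - (dyadic_profile c a + dyadic_profile c b)/2)"
    by (simp add: d_def algebra_simps)
  have "\<And>k. 0 \<le> d k"
    unfolding d_def using nonneg quad_cap_midpoint_concave[OF _ assms] by (simp add: mult_nonneg_nonneg)
  hence "sum d {k} \<le> suminf d"
    by (intro sum_le_suminf sums_summable[OF d_sums]) auto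
  thus ?thesis using sums_unique[OF d_sums] by (simp add: d_def)
qed

lemma dyadic_profile_midpoint_concave:
  assumes "0 \<le> a" "0 \<le> b"
  shows "(dyadic_profile c a + dyadic_profile c b)/2 \<le> dyadic_profile c ((a+b)/2)"
proof -
  have "0 \<le> c 0 * (quad_cap ((1/2)^0) ((a+b)/2) - (quad_cap ((1/2)^0) a + quad_cap ((1/2)^0) b)/2)"
    using nonneg[of 0] quad_cap_midpoint_concave[of 1 a b] assms by simp
  also note dyadic_profile_midpoint_defect_ge[OF assms, of 0]
  finally show ?thesis by simp
qed

end

section \<open>The Bellman profile attached to \<open>\<Psi>\<close>\<close>

lemma exists_dyadic_scale:
  fixes x :: real
  assumes "0 < x" "x \<le> 1"
  obtains k where "x \<le> (1/2)^k" "(1/2)^k < 2*x"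
proof -
  obtain n where n: "(1/2::real)^n < x" using real_arch_pow_inv[OF assms(1), of "1/2"] by auto
  define n0 where "n0 = (LEAST n. (1/2::real)^n < x)"
  have n0: "(1/2::real)^n0 < x" unfolding n0_def by (rule LeastI[of _ n], rule n)
  then obtain k where k: "n0 = Suc k" using assms(2) by (cases n0) auto
  have "\<not> (1/2::real)^k < x" using not_less_Least[of k "\<lambda>n. (1/2::real)^n < x"] k n0_def by auto
  thus ?thesis using that[of k] n0 k by simp
qed

lemma suminf_indicator_disjoint_family:
  fixes f :: "nat \<Rightarrow> ennreal"
  assumes "disjoint_family P" "x \<in> P k"
  shows "(\<Sum>n. f n * indicator (P n) x) = f k"
proof -
  have "(\<lambda>n. f n * indicator (P n) x) = (\<lambda>n. if n = k then f k else 0)"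
    using assms by (fastforce simp: indicator_def disjoint_family_on_def)
  moreover have "(\<lambda>n. if n = k then f k else 0) sums f k"
    using sums_single[of k "\<lambda>_. f k"] by simp
  ultimately show ?thesis by (simp add: sums_iff)
qed

locale admissible_Psi =
  fixes \<Psi> :: "real \<Rightarrow> real"
  assumes pos: "\<forall>s. 0 < s \<and> s \<le> 1 \<longrightarrow> 0 < \<Psi> s"
    and decr: "\<forall>s t. 0 < s \<and> s \<le> t \<and> t \<le> 1 \<longrightarrow> \<Psi> t \<le> \<Psi> s"
    and incr: "\<forall>s t. 0 < s \<and> s \<le> t \<and> t \<le> 1 \<longrightarrow> s * \<Psi> s \<le> t * \<Psi> t"
    and intfin: "(\<integral>\<^sup>+ s\<in>{0<..1}. ennreal (1 / (s * \<Psi> s)) \<partial>lborel) < \<infinity>"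
begin

definition coeff :: "nat \<Rightarrow> real" where
  "coeff k = 1 / \<Psi> ((1/2)^k)"

abbreviation bellman_profile :: "real \<Rightarrow> real" where
  "bellman_profile \<equiv> dyadic_profile coeff"

text \<open>The integrand of \<open>nPsi\<close>, with the convention used there at \<open>s = 0\<close>.\<close>

definition sPsi :: "real \<Rightarrow> real" where
  "sPsi s = (if s = 0 then 0 else s * \<Psi> s)"

lemma coeff_nonneg: "0 \<le> coeff k"
  using pos power_le_one[of "1/2::real" k] by (simp add: coeff_def less_imp_le)

text \<open>Compare \<open>\<Sum>\<^sub>k coeff k\<close> with the integral of \<open>1/(s \<Psi>(s))\<close> over the pieces
  \<open>(2^-(k+1), 2^-k]\<close>, on each of which \<open>s \<Psi>(s) \<le> 2^-k \<Psi>(2^-k)\<close>.\<close>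

lemma summable_coeff: "summable coeff"
proof -
  define P where "P k = {(1/2::real)^Suc k <.. (1/2)^k}" for k
  define v where "v k = 1 / ((1/2::real)^k * \<Psi> ((1/2)^k))" for k
  define g where "g s = (\<Sum>k. ennreal (v k) * indicator (P k) s)" for s
  have v_pos: "0 < v k" for k using pos power_le_one[of "1/2::real" k] by (simp add: v_def)
  have disj: "disjoint_family P"
    unfolding disjoint_family_on_def
  proof (intro ballI impI)
    fix k k' :: nat assume "k \<noteq> k'"
    hence "Suc k \<le> k' \<or> Suc k' \<le> k" by auto
    hence "(1/2::real)^k' \<le> (1/2)^Suc k \<or> (1/2::real)^k \<le> (1/2)^Suc k'"
      using power_decreasing[of "Suc k" k' "1/2::real"] power_decreasing[of "Suc k'" k "1/2::real"]
      by (auto simp del: power_Suc)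
    thus "P k \<inter> P k' = {}" by (auto simp: P_def)
  qed
  have "(\<integral>\<^sup>+ s. g s \<partial>lborel) = (\<Sum>k. ennreal (v k) * emeasure lborel (P k))"
    unfolding g_def by (simp add: nn_integral_suminf nn_integral_cmult_indicator P_def)
  also have "\<dots> = (\<Sum>k. ennreal (coeff k / 2))"
  proof (rule suminf_cong)
    fix k
    have "emeasure lborel (P k) = ennreal ((1/2)^k / 2)" by (simp add: P_def)
    moreover have "v k * ((1/2)^k / 2) = coeff k / 2" by (simp add: v_def coeff_def)
    ultimately show "ennreal (v k) * emeasure lborel (P k) = ennreal (coeff k / 2)"
      using v_pos[of k] by (simp add: ennreal_mult'[symmetric])
  qed
  finally have g_integral: "(\<integral>\<^sup>+ s. g s \<partial>lborel) = (\<Sum>k. ennreal (coeff k / 2))" .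
  have "g s \<le> ennreal (1 / (s * \<Psi> s)) * indicator {0<..1} s" for s
  proof (cases "\<exists>k. s \<in> P k")
    case True
    then obtain k where k: "s \<in> P k" by blast
    hence s: "0 < s" "s \<le> (1/2)^k" "s \<le> 1"
      by (auto simp: P_def intro: less_trans[rotated] order_trans[OF _ power_le_one])
    have "g s = ennreal (v k)"
      unfolding g_def by (rule suminf_indicator_disjoint_family[OF disj k])
    also have "\<dots> \<le> ennreal (1 / (s * \<Psi> s))"
    proof (rule ennreal_leI)
      have "0 < s * \<Psi> s" using pos s by simp
      moreover have "s * \<Psi> s \<le> (1/2)^k * \<Psi> ((1/2)^k)"
        using incr s power_le_one[of "1/2::real" k] by simp
      ultimately show "v k \<le> 1 / (s * \<Psi> s)" by (simp add: v_def frac_le)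
    qed
    finally show ?thesis using s by simp
  qed (simp add: g_def)
  hence "(\<integral>\<^sup>+ s. g s \<partial>lborel) \<le> (\<integral>\<^sup>+ s\<in>{0<..1}. ennreal (1 / (s * \<Psi> s)) \<partial>lborel)"
    by (rule nn_integral_mono)
  hence "(\<integral>\<^sup>+ s. g s \<partial>lborel) < \<infinity>" using intfin by (rule le_less_trans)
  hence "summable (\<lambda>k. coeff k / 2)"
    unfolding g_integral by (intro summable_suminf_not_top) (auto simp: coeff_nonneg)
  thus ?thesis by simp
qed

lemma sPsi_nonneg:
  assumes "0 \<le> s" "s \<le> 1"
  shows "0 \<le> sPsi s"
proof (cases "s = 0")
  case False
  hence "0 < \<Psi> s" using pos assms by simp
  thus ?thesis using assms by (simp add: sPsi_def)
qed (simp add: sPsi_def)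

lemma sPsi_mono:
  assumes "0 \<le> s" "s \<le> t" "t \<le> 1"
  shows "sPsi s \<le> sPsi t"
proof (cases "s = 0")
  case True
  thus ?thesis using sPsi_nonneg[of t] assms by (simp add: sPsi_def)
next
  case False
  hence "s * \<Psi> s \<le> t * \<Psi> t" using incr assms by simp
  thus ?thesis using False assms by (simp add: sPsi_def)
qed

text \<open>Choose the scale \<open>h = 2^-k\<close> with \<open>m \<le> h \<le> 4m\<close> (and \<open>a, b \<le> h\<close>): the \<open>k\<close>-th summand
  alone has defect \<open>(b - a)\<^sup>2 / (8 h \<Psi>(h))\<close>, and \<open>h \<Psi>(h) \<le> 4 m \<Psi>(m)\<close> as \<open>\<Psi>\<close> decreases.\<close>

lemma bellman_profile_defect_bound:
  assumes ab: "0 \<le> a" "a \<le> 1" "0 \<le> b" "b \<le> 1"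
  shows "(b - a)\<^sup>2 \<le>
           32 * (bellman_profile ((a+b)/2) - (bellman_profile a + bellman_profile b)/2) * sPsi ((a+b)/2)"
proof (cases "a + b = 0")
  case True
  hence "a = 0" "b = 0" using ab by auto
  thus ?thesis by (simp add: sPsi_def)
next
  case False
  define m where "m = (a+b)/2"
  have m: "0 < m" "m \<le> 1" using False ab by (auto simp: m_def)
  obtain k where k: "min 1 (2*m) \<le> (1/2)^k" "(1/2)^k < 2 * min 1 (2*m)"
    using exists_dyadic_scale[of "min 1 (2*m)"] m by auto
  define h :: real where "h = (1/2)^k"
  have "a \<le> 2*m" "b \<le> 2*m" using ab by (auto simp: m_def)
  hence "a \<le> min 1 (2*m)" "b \<le> min 1 (2*m)" "m \<le> min 1 (2*m)" "min 1 (2*m) \<le> 2*m"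
    using ab m by auto
  hence h: "0 < h" "h \<le> 1" "a \<le> h" "b \<le> h" "m \<le> h" "h \<le> 4*m"
    using k power_le_one[of "1/2::real" k] unfolding h_def by linarith+
  have "(b - a)\<^sup>2 / (8 * h * \<Psi> h) = coeff k * (quad_cap h m - (quad_cap h a + quad_cap h b)/2)"
    using quad_cap_midpoint_defect[of h a b] h ab by (simp add: coeff_def h_def m_def)
  also have "\<dots> \<le> bellman_profile m - (bellman_profile a + bellman_profile b)/2"
    unfolding h_def m_def
    by (rule dyadic_profile_midpoint_defect_ge[OF summable_coeff coeff_nonneg ab(1,3)])
  finally have defect: "(b - a)\<^sup>2 / (8 * h * \<Psi> h) \<le> bellman_profile m - (bellman_profile a + bellman_profile b)/2" .
  have Ph: "0 < \<Psi> h" and Pm: "0 < \<Psi> m" using pos h m by auto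
  have "h * \<Psi> h \<le> 4*m * \<Psi> h" using h Ph by (intro mult_right_mono) auto
  also have "\<dots> \<le> 4*m * \<Psi> m" using h m decr by (intro mult_left_mono) auto
  finally have "(b - a)\<^sup>2 * (h * \<Psi> h) \<le> (b - a)\<^sup>2 * (4 * (m * \<Psi> m))"
    by (intro mult_left_mono) auto
  hence "(b - a)\<^sup>2 \<le> 32 * (m * \<Psi> m) * ((b - a)\<^sup>2 / (8 * h * \<Psi> h))"
    using h(1) Ph by (simp add: field_simps)
  also have "\<dots> \<le> 32 * (m * \<Psi> m) * (bellman_profile m - (bellman_profile a + bellman_profile b)/2)"
    using defect m(1) Pm by (intro mult_left_mono) auto
  also have "\<dots> = 32 * (bellman_profile m - (bellman_profile a + bellman_profile b)/2) * sPsi m"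
    using m(1) by (simp add: sPsi_def)
  finally show ?thesis unfolding m_def .
qed

lemma bellman_profile_amgm:
  assumes "0 \<le> a" "a \<le> 1" "0 \<le> b" "b \<le> 1" "0 < \<mu>"
  shows "\<bar>b - a\<bar> \<le> (\<mu> * (32 * (bellman_profile ((a+b)/2) - (bellman_profile a + bellman_profile b)/2))
                    + sPsi ((a+b)/2) / \<mu>) / 2"
proof (rule abs_le_amgm)
  show "(b - a)\<^sup>2 \<le> 32 * (bellman_profile ((a+b)/2) - (bellman_profile a + bellman_profile b)/2) * sPsi ((a+b)/2)"
    by (rule bellman_profile_defect_bound[OF assms(1-4)])
  show "0 \<le> 32 * (bellman_profile ((a+b)/2) - (bellman_profile a + bellman_profile b)/2)"
    using dyadic_profile_midpoint_concave[OF summable_coeff coeff_nonneg assms(1,3)] by simp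
  show "0 \<le> sPsi ((a+b)/2)" by (rule sPsi_nonneg) (use assms in auto)
qed (fact assms(5))

end

section \<open>Distribution functions of a weight\<close>

lemma borel_measurable_antimono:
  fixes f :: "real \<Rightarrow> real"
  assumes "antimono f"
  shows "f \<in> borel_measurable borel"
proof -
  have "mono (\<lambda>t. - f t)" using assms by (auto simp: mono_def antimono_def)
  hence "(\<lambda>t. - (- f t)) \<in> borel_measurable borel"
    by (intro borel_measurable_uminus borel_measurable_mono)
  thus ?thesis by simp
qed

lemma weight_borel_measurable:
  assumes "weight w"
  shows "w \<in> borel_measurable lborel"
proof (rule borel_measurable_LIMSEQ_real)
  fix i :: nat
  have "set_integrable lborel {- real i..real i} w" using assms by (simp add: weight_def)
  thus "(\<lambda>x. indicator {- real i..real i} x * w x) \<in> borel_measurable lborel"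
    unfolding set_integrable_def by (auto dest: borel_measurable_integrable)
next
  fix x :: real
  obtain N :: nat where N: "\<bar>x\<bar> \<le> real N" using real_arch_simple by blast
  have "\<forall>\<^sub>F i in sequentially. indicator {- real i..real i} x * w x = w x"
    unfolding eventually_sequentially
  proof (intro exI[of _ N] allI impI)
    fix i assume "N \<le> i"
    hence "x \<in> {- real i..real i}" using N by auto
    thus "indicator {- real i..real i} x * w x = w x" by simp
  qed
  thus "(\<lambda>i. indicator {- real i..real i} x * w x) \<longlonglongrightarrow> w x"
    by (rule tendsto_eventually)
qed

lemma set_integrable_weight:
  assumes "weight w" "I \<in> sets lborel" "bounded I"
  shows "set_integrable lborel I w"
proof -
  obtain a where "I \<subseteq> cbox (- a) a" using bounded_subset_cbox_symmetric[OF assms(3)] by blast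
  moreover have "set_integrable lborel {-a..a} w" using assms(1) by (simp add: weight_def)
  ultimately show ?thesis using assms(2) by (auto intro: set_integrable_subset)
qed

lemma nn_integral_layer_cake:
  fixes g :: "real \<Rightarrow> real"
  assumes g[measurable]: "g \<in> borel_measurable lborel" and g_nonneg: "\<And>x. 0 \<le> g x"
    and S[measurable]: "S \<in> sets lborel"
  shows "(\<integral>\<^sup>+x\<in>S. ennreal (g x) \<partial>lborel) = (\<integral>\<^sup>+t\<in>{0<..}. emeasure lborel {x\<in>S. t < g x} \<partial>lborel)"
proof -
  define f where "f x t = (indicator {p. fst p \<in> S \<and> 0 < snd p \<and> snd p < g (fst p)} (x, t) :: ennreal)"
    for x t :: real
  have "Measurable.pred (lborel \<Otimes>\<^sub>M lborel) (\<lambda>p. fst p \<in> S \<and> 0 < snd p \<and> snd p < g (fst p))"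
    by measurable
  hence f_measurable: "case_prod f \<in> borel_measurable (lborel \<Otimes>\<^sub>M lborel)"
    unfolding f_def pred_def by (simp add: space_pair_measure)
  have "ennreal (g x) * indicator S x = (\<integral>\<^sup>+t. f x t \<partial>lborel)" for x
  proof -
    have "(\<integral>\<^sup>+t. f x t \<partial>lborel) = (\<integral>\<^sup>+t. indicator S x * indicator {0<..<g x} t \<partial>lborel)"
      by (intro nn_integral_cong) (auto simp: f_def indicator_def)
    thus ?thesis using g_nonneg[of x] by (simp add: nn_integral_cmult_indicator mult.commute)
  qed
  hence "(\<integral>\<^sup>+x\<in>S. ennreal (g x) \<partial>lborel) = (\<integral>\<^sup>+x. \<integral>\<^sup>+t. f x t \<partial>lborel \<partial>lborel)"
    by simp
  also have "\<dots> = (\<integral>\<^sup>+t. \<integral>\<^sup>+x. f x t \<partial>lborel \<partial>lborel)"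
    by (rule lborel_pair.Fubini'[OF f_measurable, symmetric])
  also have "\<dots> = (\<integral>\<^sup>+t\<in>{0<..}. emeasure lborel {x\<in>S. t < g x} \<partial>lborel)"
  proof (rule nn_integral_cong)
    fix t :: real
    have "(\<integral>\<^sup>+x. f x t \<partial>lborel) = (\<integral>\<^sup>+x. indicator {x\<in>S. t < g x} x * indicator {0<..} t \<partial>lborel)"
      by (intro nn_integral_cong) (auto simp: f_def indicator_def)
    thus "(\<integral>\<^sup>+x. f x t \<partial>lborel) = emeasure lborel {x\<in>S. t < g x} * indicator {0<..} t"
      by (simp add: nn_integral_multc)
  qed
  finally show ?thesis .
qed

abbreviation pos_halfline :: "real measure" where
  "pos_halfline \<equiv> restrict_space lborel {0<..}"

lemma integrable_pos_halfline_of_nn_integral: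
  fixes f :: "real \<Rightarrow> real"
  assumes "f \<in> borel_measurable borel" "\<And>t. 0 \<le> f t"
    and "(\<integral>\<^sup>+t\<in>{0<..}. ennreal (f t) \<partial>lborel) = ennreal r" "0 \<le> r"
  shows "integrable pos_halfline f" "integral\<^sup>L pos_halfline f = r"
proof -
  have "(\<integral>\<^sup>+t. ennreal (f t) \<partial>pos_halfline) = ennreal r"
    using assms(3) by (simp add: nn_integral_restrict_space)
  moreover have "f \<in> borel_measurable pos_halfline"
    using assms(1) by (simp add: measurable_restrict_space1)
  ultimately show "integrable pos_halfline f" "integral\<^sup>L pos_halfline f = r"
    using assms(2,4) nn_integral_eq_integrable by blast+
qed

lemma Ndist_nonneg: "0 \<le> Ndist w I t"
  by (simp add: Ndist_def)

context
  fixes w :: "real \<Rightarrow> real" and I :: "real set"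
  assumes weight: "weight w" and I_sets: "I \<in> sets lborel" and I_bounded: "bounded I"
    and I_pos: "0 < measure lborel I"
begin

lemma level_set_sets: "{x\<in>I. t < w x} \<in> sets lborel"
  using weight_borel_measurable[OF weight] I_sets by measurable

lemma emeasure_level_set: "emeasure lborel {x\<in>I. t < w x} = ennreal (measure lborel {x\<in>I. t < w x})"
proof -
  have "emeasure lborel {x\<in>I. t < w x} \<le> emeasure lborel I"
    using I_sets by (intro emeasure_mono) auto
  also have "\<dots> < \<infinity>" by (rule emeasure_bounded_finite[OF I_bounded])
  finally show ?thesis by (simp add: emeasure_eq_ennreal_measure)
qed

lemma measure_level_set_mono:
  assumes "t \<le> t'"
  shows "measure lborel {x\<in>I. t' < w x} \<le> measure lborel {x\<in>I. t < w x}"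
  using assms emeasure_level_set level_set_sets
  by (intro measure_mono_fmeasurable) (auto simp: fmeasurable_def)

lemma Ndist_le_one: "Ndist w I t \<le> 1"
proof -
  have "measure lborel {x\<in>I. t < w x} \<le> measure lborel I"
    using I_sets emeasure_bounded_finite[OF I_bounded] level_set_sets
    by (intro measure_mono_fmeasurable) (auto simp: fmeasurable_def)
  thus ?thesis using I_pos by (simp add: Ndist_def)
qed

lemma antimono_Ndist: "antimono (Ndist w I)"
  using measure_level_set_mono I_pos by (auto simp: antimono_def Ndist_def divide_right_mono)

lemma Ndist_borel_measurable: "Ndist w I \<in> borel_measurable borel"
  by (rule borel_measurable_antimono[OF antimono_Ndist])

lemma nn_integral_Ndist: "(\<integral>\<^sup>+t\<in>{0<..}. ennreal (Ndist w I t) \<partial>lborel) = ennreal (avg w I)"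
proof -
  define \<mu> where "\<mu> = measure lborel I"
  have w_nonneg: "\<And>x. 0 \<le> w x" using weight by (simp add: weight_def)
  have "ennreal (wmeas w I) = (\<integral>\<^sup>+x. ennreal (indicator I x *\<^sub>R w x) \<partial>lborel)"
    using set_integrable_weight[OF weight I_sets I_bounded] w_nonneg
    unfolding wmeas_def set_lebesgue_integral_def set_integrable_def
    by (intro nn_integral_eq_integral[symmetric]) auto
  also have "\<dots> = (\<integral>\<^sup>+x\<in>I. ennreal (w x) \<partial>lborel)"
    by (intro nn_integral_cong) (simp split: split_indicator)
  also have "\<dots> = (\<integral>\<^sup>+t\<in>{0<..}. emeasure lborel {x\<in>I. t < w x} \<partial>lborel)"
    by (rule nn_integral_layer_cake[OF weight_borel_measurable[OF weight] w_nonneg I_sets])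
  also have "\<dots> = (\<integral>\<^sup>+t\<in>{0<..}. ennreal \<mu> * ennreal (Ndist w I t) \<partial>lborel)"
    using I_pos
    by (intro nn_integral_cong) (simp add: emeasure_level_set Ndist_def \<mu>_def ennreal_mult'[symmetric])
  also have "\<dots> = ennreal \<mu> * (\<integral>\<^sup>+t\<in>{0<..}. ennreal (Ndist w I t) \<partial>lborel)"
    using Ndist_borel_measurable by (subst nn_integral_cmult[symmetric]) (auto simp: mult.assoc)
  finally have E: "ennreal (wmeas w I) = ennreal \<mu> * (\<integral>\<^sup>+t\<in>{0<..}. ennreal (Ndist w I t) \<partial>lborel)" .
  have "(\<integral>\<^sup>+t\<in>{0<..}. ennreal (Ndist w I t) \<partial>lborel)
        = ennreal (1 / \<mu>) * (ennreal \<mu> * (\<integral>\<^sup>+t\<in>{0<..}. ennreal (Ndist w I t) \<partial>lborel))"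
    using I_pos by (simp add: mult.assoc[symmetric] ennreal_mult[symmetric] \<mu>_def)
  also have "\<dots> = ennreal (avg w I)"
    unfolding E[symmetric] using I_pos by (simp add: avg_def \<mu>_def ennreal_mult'[symmetric])
  finally show ?thesis .
qed

lemma integrable_Ndist: "integrable pos_halfline (Ndist w I)"
  and integral_Ndist: "integral\<^sup>L pos_halfline (Ndist w I) = avg w I"
proof -
  have "0 \<le> avg w I"
    using weight unfolding avg_def wmeas_def set_lebesgue_integral_def
    by (intro divide_nonneg_nonneg Bochner_Integration.integral_nonneg) (auto simp: weight_def)
  thus "integrable pos_halfline (Ndist w I)" "integral\<^sup>L pos_halfline (Ndist w I) = avg w I"
    using integrable_pos_halfline_of_nn_integral[OF Ndist_borel_measurable Ndist_nonneg nn_integral_Ndist]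
    by auto
qed

end

lemma measure_dyadic: "measure lborel (dyadic j k) = 2 powr (- real_of_int j)"
  by (simp add: dyadic_def algebra_simps)

lemma dyadic_sets: "dyadic j k \<in> sets lborel"
  by (simp add: dyadic_def)

lemma bounded_dyadic: "bounded (dyadic j k)"
  by (simp add: dyadic_def)

lemma measure_dyadic_pos: "0 < measure lborel (dyadic j k)"
  by (simp add: measure_dyadic)

lemmas dyadic_facts = dyadic_sets bounded_dyadic measure_dyadic_pos

lemma two_powr_neg_succ: "2 powr (- real_of_int (j + 1)) = 2 powr (- real_of_int j) / 2"
proof -
  have "- real_of_int (j + 1) = - real_of_int j - 1" by simp
  thus ?thesis by (simp only: powr_diff powr_one)
qed

lemma dyadic_halves:
  "dyadic j k = dyadic (j+1) (2*k) \<union> dyadic (j+1) (2*k+1)"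
  "dyadic (j+1) (2*k) \<inter> dyadic (j+1) (2*k+1) = {}"
proof -
  define p where "p = 2 powr (- real_of_int j)"
  have p: "0 < p" by (simp add: p_def)
  have child: "dyadic (j+1) m = {real_of_int m * (p/2) ..< (real_of_int m + 1) * (p/2)}" for m
    unfolding dyadic_def two_powr_neg_succ p_def ..
  have halves: "dyadic (j+1) (2*k) = {k*p ..< (k + 1/2)*p}"
    "dyadic (j+1) (2*k+1) = {(k + 1/2)*p ..< (real_of_int k + 1)*p}"
    unfolding child by (simp_all add: algebra_simps)
  have whole: "dyadic j k = {k*p ..< (real_of_int k + 1)*p}"
    unfolding dyadic_def p_def ..
  show "dyadic j k = dyadic (j+1) (2*k) \<union> dyadic (j+1) (2*k+1)"
    unfolding halves whole using p by (intro ivl_disj_un_two(3)[symmetric] mult_right_mono) auto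
  show "dyadic (j+1) (2*k) \<inter> dyadic (j+1) (2*k+1) = {}"
    unfolding halves by auto
qed

lemma Ndist_dyadic_midpoint:
  assumes "weight w"
  shows "Ndist w (dyadic j k) t = (Ndist w (dyadic (j+1) (2*k)) t + Ndist w (dyadic (j+1) (2*k+1)) t) / 2"
proof -
  let ?L = "{x\<in>dyadic (j+1) (2*k). t < w x}" and ?R = "{x\<in>dyadic (j+1) (2*k+1). t < w x}"
  note level = emeasure_level_set[OF assms dyadic_sets bounded_dyadic measure_dyadic_pos]
    level_set_sets[OF assms dyadic_sets bounded_dyadic measure_dyadic_pos]
  have "{x\<in>dyadic j k. t < w x} = ?L \<union> ?R" "?L \<inter> ?R = {}"
    using dyadic_halves[of j k] by blast+
  moreover have "measure lborel (?L \<union> ?R) = measure lborel ?L + measure lborel ?R"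
    by (rule measure_Union) (use level calculation(2) in simp_all)
  ultimately show ?thesis
    unfolding Ndist_def measure_dyadic two_powr_neg_succ by (simp add: add_divide_distrib)
qed

section \<open>The Bellman function and the local estimate\<close>

context admissible_Psi
begin

definition bellman :: "(real \<Rightarrow> real) \<Rightarrow> real set \<Rightarrow> real" where
  "bellman w I = (\<integral>t. bellman_profile (Ndist w I t) \<partial>pos_halfline)"

context
  fixes w :: "real \<Rightarrow> real" and I :: "real set"
  assumes weight: "weight w" and I_sets: "I \<in> sets lborel" and I_bounded: "bounded I"
    and I_pos: "0 < measure lborel I"
begin

lemmas Ndist_facts =
  Ndist_nonneg[of w I] Ndist_le_one[OF weight I_sets I_bounded I_pos]
  antimono_Ndist[OF weight I_sets I_bounded I_pos]
  integrable_Ndist[OF weight I_sets I_bounded I_pos] integral_Ndist[OF weight I_sets I_bounded I_pos]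

lemma integrable_bellman_profile_Ndist:
  "integrable pos_halfline (\<lambda>t. bellman_profile (Ndist w I t))"
proof (rule Bochner_Integration.integrable_bound)
  show "integrable pos_halfline (\<lambda>t. suminf coeff * Ndist w I t)"
    using Ndist_facts by simp
  have "antimono (\<lambda>t. bellman_profile (Ndist w I t))"
    using Ndist_facts dyadic_profile_mono[OF summable_coeff coeff_nonneg]
    by (auto simp: antimono_def)
  hence "(\<lambda>t. bellman_profile (Ndist w I t)) \<in> borel_measurable borel"
    by (rule borel_measurable_antimono)
  thus "(\<lambda>t. bellman_profile (Ndist w I t)) \<in> borel_measurable pos_halfline"
    by (simp add: measurable_restrict_space1)
  show "AE t in pos_halfline. norm (bellman_profile (Ndist w I t)) \<le> norm (suminf coeff * Ndist w I t)"
    using Ndist_facts dyadic_profile_nonneg[OF summable_coeff coeff_nonneg]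
      dyadic_profile_le[OF summable_coeff coeff_nonneg]
      suminf_nonneg[OF summable_coeff coeff_nonneg]
    by auto
qed

lemma bellman_le: "bellman w I \<le> suminf coeff * avg w I"
proof -
  have "bellman w I \<le> (\<integral>t. suminf coeff * Ndist w I t \<partial>pos_halfline)"
    unfolding bellman_def using integrable_bellman_profile_Ndist Ndist_facts
    by (intro integral_mono dyadic_profile_le[OF summable_coeff coeff_nonneg]) auto
  thus ?thesis using Ndist_facts by simp
qed

lemma bellman_nonneg: "0 \<le> bellman w I"
  unfolding bellman_def
  by (intro Bochner_Integration.integral_nonneg dyadic_profile_nonneg[OF summable_coeff coeff_nonneg])

lemma integrable_sPsi_Ndist:
  assumes "nPsi \<Psi> (Ndist w I) < \<infinity>"
  shows "integrable pos_halfline (\<lambda>t. sPsi (Ndist w I t))"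
    and "(\<integral>t. sPsi (Ndist w I t) \<partial>pos_halfline) = enn2real (nPsi \<Psi> (Ndist w I))"
proof -
  have "antimono (\<lambda>t. sPsi (Ndist w I t))"
    using Ndist_facts by (auto simp: antimono_def intro!: sPsi_mono)
  moreover have "nPsi \<Psi> (Ndist w I) = (\<integral>\<^sup>+t\<in>{0<..}. ennreal (sPsi (Ndist w I t)) \<partial>lborel)"
    by (simp add: nPsi_def sPsi_def)
  ultimately show "integrable pos_halfline (\<lambda>t. sPsi (Ndist w I t))"
    and "(\<integral>t. sPsi (Ndist w I t) \<partial>pos_halfline) = enn2real (nPsi \<Psi> (Ndist w I))"
    using integrable_pos_halfline_of_nn_integral[of "\<lambda>t. sPsi (Ndist w I t)" "enn2real (nPsi \<Psi> (Ndist w I))"]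
      assms Ndist_facts sPsi_nonneg borel_measurable_antimono
    by (auto simp: less_top)
qed

end

context
  fixes w :: "real \<Rightarrow> real" and j k :: int
  assumes weight: "weight w"
begin

lemma bellman_dyadic_defect:
  "bellman w (dyadic j k) - (bellman w (dyadic (j+1) (2*k)) + bellman w (dyadic (j+1) (2*k+1)))/2 =
   (\<integral>t. bellman_profile (Ndist w (dyadic j k) t)
      - (bellman_profile (Ndist w (dyadic (j+1) (2*k)) t)
         + bellman_profile (Ndist w (dyadic (j+1) (2*k+1)) t))/2 \<partial>pos_halfline)"
  using integrable_bellman_profile_Ndist[OF weight dyadic_facts]
  unfolding bellman_def by (simp add: Bochner_Integration.integral_diff Bochner_Integration.integral_add)

text \<open>Since \<open>N\<^sub>I = (N\<^sub>I\<^sub>- + N\<^sub>I\<^sub>+) / 2\<close>, the integrand above is a midpoint defect of the profile.\<close>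

lemma bellman_dyadic_children_le:
  "bellman w (dyadic (j+1) (2*k)) + bellman w (dyadic (j+1) (2*k+1)) \<le> 2 * bellman w (dyadic j k)"
proof -
  have "0 \<le> bellman w (dyadic j k) - (bellman w (dyadic (j+1) (2*k)) + bellman w (dyadic (j+1) (2*k+1)))/2"
    unfolding bellman_dyadic_defect Ndist_dyadic_midpoint[OF weight, of j k]
    using dyadic_profile_midpoint_concave[OF summable_coeff coeff_nonneg]
    by (intro Bochner_Integration.integral_nonneg) (simp add: Ndist_nonneg)
  thus ?thesis by simp
qed

lemma abs_Delta_le_integral:
  "\<bar>Delta w j k\<bar> \<le> (\<integral>t. \<bar>Ndist w (dyadic (j+1) (2*k+1)) t - Ndist w (dyadic (j+1) (2*k)) t\<bar> \<partial>pos_halfline)"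
proof -
  note A = Ndist_facts[OF weight dyadic_facts, of "j+1" "2*k"]
  note B = Ndist_facts[OF weight dyadic_facts, of "j+1" "2*k+1"]
  have "Delta w j k = (\<integral>t. Ndist w (dyadic (j+1) (2*k+1)) t - Ndist w (dyadic (j+1) (2*k)) t \<partial>pos_halfline)"
    using A B by (simp add: Delta_def Bochner_Integration.integral_diff)
  thus ?thesis using integral_abs_bound by simp
qed

text \<open>Cauchy-Schwarz in disguise: integrate the pointwise AM-GM bound, then optimise over \<open>\<mu>\<close>.\<close>

lemma dyadic_local_estimate:
  assumes fin: "nPsi \<Psi> (Ndist w (dyadic j k)) < \<infinity>"
  shows "(Delta w j k)\<^sup>2 * measure lborel (dyadic j k) / enn2real (nPsi \<Psi> (Ndist w (dyadic j k)))
      \<le> 32 * measure lborel (dyadic j k) *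
          (bellman w (dyadic j k) - (bellman w (dyadic (j+1) (2*k)) + bellman w (dyadic (j+1) (2*k+1)))/2)"
proof -
  define A B N where "A = Ndist w (dyadic (j+1) (2*k))" and "B = Ndist w (dyadic (j+1) (2*k+1))"
    and "N = Ndist w (dyadic j k)"
  define D where "D t = bellman_profile (N t) - (bellman_profile (A t) + bellman_profile (B t))/2" for t
  define Q where "Q = bellman w (dyadic j k) - (bellman w (dyadic (j+1) (2*k)) + bellman w (dyadic (j+1) (2*k+1)))/2"
  define P where "P = enn2real (nPsi \<Psi> N)"
  note A = Ndist_facts[OF weight dyadic_facts, of "j+1" "2*k", folded A_def]
  note B = Ndist_facts[OF weight dyadic_facts, of "j+1" "2*k+1", folded B_def]
  have N: "N t = (A t + B t)/2" for t
    unfolding A_def B_def N_def by (rule Ndist_dyadic_midpoint[OF weight])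
  have int_D: "integrable pos_halfline D" and Q_eq: "Q = integral\<^sup>L pos_halfline D"
    using integrable_bellman_profile_Ndist[OF weight dyadic_facts]
    unfolding D_def Q_def A_def B_def N_def bellman_dyadic_defect
    by (simp_all add: Bochner_Integration.integrable_diff)
  have int_P: "integrable pos_halfline (\<lambda>t. sPsi (N t))" and P_eq: "P = (\<integral>t. sPsi (N t) \<partial>pos_halfline)"
    using integrable_sPsi_Ndist[OF weight dyadic_facts fin] by (simp_all add: N_def P_def)
  have amgm: "\<bar>Delta w j k\<bar> \<le> (\<mu> * (32 * Q) + P / \<mu>) / 2" if "0 < \<mu>" for \<mu>
  proof -
    have "\<bar>Delta w j k\<bar> \<le> (\<integral>t. \<bar>B t - A t\<bar> \<partial>pos_halfline)"
      unfolding A_def B_def by (rule abs_Delta_le_integral)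
    also have "\<dots> \<le> (\<integral>t. (\<mu> * (32 * D t) + sPsi (N t) / \<mu>) / 2 \<partial>pos_halfline)"
    proof (rule integral_mono)
      show "integrable pos_halfline (\<lambda>t. \<bar>B t - A t\<bar>)" using A B by auto
      show "integrable pos_halfline (\<lambda>t. (\<mu> * (32 * D t) + sPsi (N t) / \<mu>) / 2)"
        using int_D int_P by auto
      show "\<bar>B t - A t\<bar> \<le> (\<mu> * (32 * D t) + sPsi (N t) / \<mu>) / 2" for t
        unfolding D_def N using A B that by (intro bellman_profile_amgm) auto
    qed
    also have "\<dots> = (\<mu> * (32 * Q) + P / \<mu>) / 2"
      using int_D int_P by (simp add: Q_eq P_eq Bochner_Integration.integral_add)
    finally show ?thesis .
  qed
  have "0 \<le> Q" using bellman_dyadic_children_le by (simp add: Q_def)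
  hence "(Delta w j k)\<^sup>2 / P \<le> 32 * Q"
    by (intro sq_div_le_of_forall_amgm amgm) (simp_all add: P_def)
  hence "(Delta w j k)\<^sup>2 / P * measure lborel (dyadic j k) \<le> 32 * Q * measure lborel (dyadic j k)"
    by (rule mult_right_mono) simp
  thus ?thesis by (simp add: P_def Q_def N_def mult_ac)
qed

end

end

section \<open>Telescoping over the dyadic tree\<close>

text \<open>Indices of the subintervals of \<open>dyadic j k\<close> lying fewer than \<open>n\<close> generations below it.\<close>

definition dyadic_descendants :: "nat \<Rightarrow> int \<Rightarrow> int \<Rightarrow> (int \<times> int) set" where
  "dyadic_descendants n j k = {(a, b). \<exists>i<n. a = j + int i \<and> k * 2^i \<le> b \<and> b < (k+1) * 2^i}"

lemma dyadic_descendants_0 [simp]: "dyadic_descendants 0 j k = {}"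
  by (simp add: dyadic_descendants_def)

lemma dyadic_descendants_mono: "n \<le> m \<Longrightarrow> dyadic_descendants n j k \<subseteq> dyadic_descendants m j k"
  unfolding dyadic_descendants_def by force

lemma dyadic_descendants_fst_ge: "(a, b) \<in> dyadic_descendants n j k \<Longrightarrow> j \<le> a"
  unfolding dyadic_descendants_def by auto

lemma dyadic_descendants_children_disjoint:
  "dyadic_descendants n (j+1) (2*k) \<inter> dyadic_descendants n (j+1) (2*k+1) = {}"
  unfolding dyadic_descendants_def by auto

lemma dyadic_descendants_Suc:
  "dyadic_descendants (Suc n) j k =
     insert (j, k) (dyadic_descendants n (j+1) (2*k) \<union> dyadic_descendants n (j+1) (2*k+1))"
proof -
  have split: "k * 2^Suc i \<le> b \<and> b < (k+1) * 2^Suc i \<longleftrightarrow>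
      (2*k) * 2^i \<le> b \<and> b < (2*k+1) * 2^i \<or> (2*k+1) * 2^i \<le> b \<and> b < (2*k+1+1) * 2^i"
    for i :: nat and b :: int
    by (auto simp: algebra_simps)
  have "(a, b) \<in> dyadic_descendants (Suc n) j k \<longleftrightarrow>
      (a, b) = (j, k) \<or> (\<exists>i<n. a = j + 1 + int i \<and> k * 2^Suc i \<le> b \<and> b < (k+1) * 2^Suc i)"
    for a b
    unfolding dyadic_descendants_def by (auto simp: less_Suc_eq_0_disj)
  thus ?thesis unfolding split dyadic_descendants_def by (auto simp: add.assoc)
qed

lemma finite_dyadic_descendants: "finite (dyadic_descendants n j k)"
  by (induction n arbitrary: j k) (simp_all add: dyadic_descendants_Suc)

lemma dyadic_subset_imp_descendant:
  assumes "dyadic j' k' \<subseteq> dyadic j k"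
  shows "(j', k') \<in> dyadic_descendants (Suc (nat (j' - j))) j k"
proof -
  define p p' where "p = 2 powr (- real_of_int j)" and "p' = 2 powr (- real_of_int j')"
  have p: "0 < p" "0 < p'" by (simp_all add: p_def p'_def)
  have "{k' * p' ..< (k' + 1) * p'} \<subseteq> {k * p ..< (k + 1) * p}"
    using assms by (simp add: dyadic_def p_def p'_def)
  moreover have "k' * p' < (k' + 1) * p'" using p by (simp add: algebra_simps)
  ultimately have le: "k * p \<le> k' * p'" "(k' + 1) * p' \<le> (k + 1) * p"
    using atLeastLessThan_subset_iff by fastforce+
  hence "p' \<le> p" by (simp add: algebra_simps)
  hence jj: "j \<le> j'" by (simp add: p_def p'_def)
  define i where "i = nat (j' - j)"
  have "- real_of_int j = - real_of_int j' + real i" using jj by (simp add: i_def)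
  hence "p = p' * 2 powr (real i)" unfolding p_def p'_def by (simp only: powr_add)
  hence pe: "p = p' * 2^i" by (simp add: powr_realpow)
  have "real_of_int (k * 2^i) \<le> real_of_int k'"
    using le(1) p unfolding pe by (simp add: mult_ac)
  moreover have "real_of_int (k' + 1) \<le> real_of_int ((k + 1) * 2^i)"
    using le(2) p unfolding pe by (simp add: mult_ac)
  ultimately have "k * 2^i \<le> k'" "k' < (k + 1) * 2^i" by linarith+
  moreover have "j' = j + int i" using jj by (simp add: i_def)
  ultimately show ?thesis unfolding dyadic_descendants_def i_def[symmetric] by auto
qed

lemma sum_dyadic_descendants_le:
  fixes T :: "int \<times> int \<Rightarrow> ennreal" and V :: "int \<Rightarrow> int \<Rightarrow> real"
  assumes "\<And>j k. T (j, k) + ennreal (V (j+1) (2*k)) + ennreal (V (j+1) (2*k+1)) \<le> ennreal (V j k)"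
  shows "sum T (dyadic_descendants n j k) \<le> ennreal (V j k)"
proof (induction n arbitrary: j k)
  case (Suc n)
  have "(j, k) \<notin> dyadic_descendants n (j+1) (2*k) \<union> dyadic_descendants n (j+1) (2*k+1)"
    using dyadic_descendants_fst_ge by fastforce
  hence "sum T (dyadic_descendants (Suc n) j k) =
      T (j, k) + sum T (dyadic_descendants n (j+1) (2*k)) + sum T (dyadic_descendants n (j+1) (2*k+1))"
    using dyadic_descendants_children_disjoint
    by (simp add: dyadic_descendants_Suc finite_dyadic_descendants sum.union_disjoint add.assoc)
  also have "\<dots> \<le> T (j, k) + ennreal (V (j+1) (2*k)) + ennreal (V (j+1) (2*k+1))"
    by (intro add_mono Suc.IH order_refl)
  also have "\<dots> \<le> ennreal (V j k)" by (rule assms)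
  finally show ?case .
qed simp

lemma infsum_dyadic_subintervals_le:
  fixes T :: "int \<times> int \<Rightarrow> ennreal" and V :: "int \<Rightarrow> int \<Rightarrow> real"
  assumes "\<And>j k. T (j, k) + ennreal (V (j+1) (2*k)) + ennreal (V (j+1) (2*k+1)) \<le> ennreal (V j k)"
  shows "infsum T {(j, k). dyadic j k \<subseteq> dyadic jJ kJ} \<le> ennreal (V jJ kJ)"
proof (rule infsum_le_finite_sums)
  show "T summable_on {(j, k). dyadic j k \<subseteq> dyadic jJ kJ}"
    by (rule nonneg_summable_on_complete) simp
next
  fix F assume F: "finite F" "F \<subseteq> {(j, k). dyadic j k \<subseteq> dyadic jJ kJ}"
  define n where "n = Suc (Max ((\<lambda>x. nat (fst x - jJ)) ` F))"
  have "F \<subseteq> dyadic_descendants n jJ kJ"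
  proof
    fix x assume "x \<in> F"
    obtain j k where x: "x = (j, k)" by fastforce
    have "Suc (nat (j - jJ)) \<le> n"
      using Max_ge[OF finite_imageI[OF F(1)] imageI[OF \<open>x \<in> F\<close>], of "\<lambda>x. nat (fst x - jJ)"]
      by (simp add: n_def x)
    moreover have "dyadic j k \<subseteq> dyadic jJ kJ" using F(2) \<open>x \<in> F\<close> by (auto simp: x)
    ultimately show "x \<in> dyadic_descendants n jJ kJ"
      using dyadic_subset_imp_descendant dyadic_descendants_mono unfolding x by blast
  qed
  hence "sum T F \<le> sum T (dyadic_descendants n jJ kJ)"
    by (simp add: sum_mono2 finite_dyadic_descendants)
  also have "\<dots> \<le> ennreal (V jJ kJ)" by (rule sum_dyadic_descendants_le[OF assms])
  finally show "sum T F \<le> ennreal (V jJ kJ)" .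
qed

section \<open>The Carleson-type estimate\<close>

context admissible_Psi
begin

definition dyadic_potential :: "(real \<Rightarrow> real) \<Rightarrow> int \<Rightarrow> int \<Rightarrow> real" where
  "dyadic_potential w j k = 32 * measure lborel (dyadic j k) * bellman w (dyadic j k)"

context
  fixes w :: "real \<Rightarrow> real"
  assumes weight: "weight w"
begin

lemma dyadic_potential_nonneg: "0 \<le> dyadic_potential w j k"
  using bellman_nonneg[OF weight dyadic_facts] by (simp add: dyadic_potential_def)

lemma dyadic_potential_le: "dyadic_potential w j k \<le> 32 * suminf coeff * wmeas w (dyadic j k)"
proof -
  have "dyadic_potential w j k \<le> 32 * measure lborel (dyadic j k) * (suminf coeff * avg w (dyadic j k))"
    unfolding dyadic_potential_def using bellman_le[OF weight dyadic_facts]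
    by (intro mult_left_mono) simp_all
  thus ?thesis using measure_dyadic_pos[of j k] by (simp add: avg_def)
qed

lemma dyadic_potential_step:
  assumes "nPsi \<Psi> (Ndist w (dyadic j k)) < \<infinity>"
  shows "ennreal ((Delta w j k)\<^sup>2 * measure lborel (dyadic j k) / enn2real (nPsi \<Psi> (Ndist w (dyadic j k))))
           + ennreal (dyadic_potential w (j+1) (2*k)) + ennreal (dyadic_potential w (j+1) (2*k+1))
         \<le> ennreal (dyadic_potential w j k)"
proof -
  have half: "measure lborel (dyadic (j+1) m) = measure lborel (dyadic j k) / 2" for m
    by (simp only: measure_dyadic two_powr_neg_succ)
  have "32 * measure lborel (dyadic j k) *
        (bellman w (dyadic j k) - (bellman w (dyadic (j+1) (2*k)) + bellman w (dyadic (j+1) (2*k+1)))/2)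
      = dyadic_potential w j k - dyadic_potential w (j+1) (2*k) - dyadic_potential w (j+1) (2*k+1)"
    unfolding dyadic_potential_def half by (simp add: algebra_simps)
  hence "(Delta w j k)\<^sup>2 * measure lborel (dyadic j k) / enn2real (nPsi \<Psi> (Ndist w (dyadic j k)))
      \<le> dyadic_potential w j k - dyadic_potential w (j+1) (2*k) - dyadic_potential w (j+1) (2*k+1)"
    using dyadic_local_estimate[OF weight assms] by simp
  thus ?thesis
    using dyadic_potential_nonneg by (simp add: ennreal_plus[symmetric] del: ennreal_plus)
qed

end

end

theorem theorem2p2:
  fixes \<Psi> :: "real \<Rightarrow> real"
  assumes pos: "\<forall>s. 0 < s \<and> s \<le> 1 \<longrightarrow> 0 < \<Psi> s"
    and decr: "\<forall>s t. 0 < s \<and> s \<le> t \<and> t \<le> 1 \<longrightarrow> \<Psi> t \<le> \<Psi> s"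
    and incr: "\<forall>s t. 0 < s \<and> s \<le> t \<and> t \<le> 1 \<longrightarrow> s * \<Psi> s \<le> t * \<Psi> t"
    and intfin: "(\<integral>\<^sup>+ s\<in>{0<..1}. ennreal (1 / (s * \<Psi> s)) \<partial>lborel) < \<infinity>"
  shows "\<exists>C::real. \<forall>w. weight w \<and> (\<forall>j k. nPsi \<Psi> (Ndist w (dyadic j k)) < \<infinity>) \<longrightarrow>
     (\<forall>jJ kJ.
       (\<Sum>\<^sub>\<infinity>(j,k)\<in>{(j,k). dyadic j k \<subseteq> dyadic jJ kJ}.
          (if (AE x in lborel. x \<in> dyadic j k \<longrightarrow> w x = 0) then 0
           else ennreal ((Delta w j k)\<^sup>2 * measure lborel (dyadic j k)
                   / enn2real (nPsi \<Psi> (Ndist w (dyadic j k))))))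
       \<le> ennreal (C * wmeas w (dyadic jJ kJ)))"
proof -
  interpret admissible_Psi \<Psi> using assms by unfold_locales
  show ?thesis
  proof (intro exI[of _ "32 * suminf coeff"] allI impI)
    fix w jJ kJ
    assume "weight w \<and> (\<forall>j k. nPsi \<Psi> (Ndist w (dyadic j k)) < \<infinity>)"
    hence weight: "weight w" and fin: "\<And>j k. nPsi \<Psi> (Ndist w (dyadic j k)) < \<infinity>" by auto
    let ?T = "\<lambda>(j,k). if (AE x in lborel. x \<in> dyadic j k \<longrightarrow> w x = 0) then 0
      else ennreal ((Delta w j k)\<^sup>2 * measure lborel (dyadic j k) / enn2real (nPsi \<Psi> (Ndist w (dyadic j k))))"
    have "infsum ?T {(j,k). dyadic j k \<subseteq> dyadic jJ kJ} \<le> ennreal (dyadic_potential w jJ kJ)"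
    proof (rule infsum_dyadic_subintervals_le)
      fix j k
      show "?T (j, k) + ennreal (dyadic_potential w (j+1) (2*k)) + ennreal (dyadic_potential w (j+1) (2*k+1))
          \<le> ennreal (dyadic_potential w j k)"
        by (rule order_trans[OF _ dyadic_potential_step[OF weight fin]]) (simp add: add_right_mono)
    qed
    also have "\<dots> \<le> ennreal (32 * suminf coeff * wmeas w (dyadic jJ kJ))"
      by (intro ennreal_leI dyadic_potential_le[OF weight])
    finally show "infsum ?T {(j,k). dyadic j k \<subseteq> dyadic jJ kJ} \<le> ennreal (32 * suminf coeff * wmeas w (dyadic jJ kJ))" .
  qed
qed

end
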